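(* Consider the oLBFGS iteration described in the context and let $\hat B_t$ denote its Hessian approximation. If Assumption A holds, then for all times $t\ge1$, $\operatorname{tr}(\hat B_t)\le (n+\tau)\tilde M$ and $\det(\hat B_t)\ge \frac{\tilde m^{\,n+\tau}}{[(n+\tau)\tilde M]^{\tau}}$.
   Context: Let $\theta$ be a random variable with values in a set $\Theta$, $f:\mathbb{R}^n\times\Theta\to\mathbb{R}$, and $F(w)=\mathbb{E}_\theta[f(w,\theta)]$. Fix a sample size $L\ge1$ and memory $\tau\ge1$. For $\tilde\theta=(\theta_1,\dots,\theta_L)\in\Theta^L$ put $\hat f(w,\tilde\theta)=\frac1L\sum_{l=1}^L f(w,\theta_l)$ and $\hat s(w,\tilde\theta)=\frac1L\sum_{l=1}^L\nabla_w f(w,\theta_l)$. oLBFGS: starting from $w_0\in\mathbb{R}^n$, at each $t\ge0$ draw $\tilde\theta_t$ consisting of $L$ independent samples of $\theta$, set $w_{t+1}=w_t-\epsilon_t\hat B_t^{-1}\hat s(w_t,\tilde\theta_t)$ with step sizes $\epsilon_t>0$, and set $v_t=w_{t+1}-w_t$, $\hat r_t=\hat s(w_{t+1},\tilde\theta_t)-\hat s(w_t,\tilde\theta_t)$. The Hessian approximation $\hat B_t$ is built as follows: let $\tau_t=\min(\tau,t)$; set $\hat B_{t,0}=\hat\gamma_t^{-1}I$ with $\hat\gamma_0=1$ and $\hat\gamma_t=v_{t-1}^T\hat r_{t-1}/\|\hat r_{t-1}\|^2$ for $t\ge1$; for $u=0,\dots,\tau_t-1$, with $s=t-\tau_t+u$,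 set $\hat B_{t,u+1}=\hat B_{t,u}-\frac{\hat B_{t,u}v_sv_s^T\hat B_{t,u}}{v_s^T\hat B_{t,u}v_s}+\frac{\hat r_s\hat r_s^T}{v_s^T\hat r_s}$; finally $\hat B_t=\hat B_{t,\tau_t}$, and $\hat B_t^{-1}$ is its inverse (equivalently obtained from $\hat B_{t,0}^{-1}=\hat\gamma_tI$ by $\hat B_{t,u+1}^{-1}=\hat Z_s^T\hat B_{t,u}^{-1}\hat Z_s+\hat\rho_sv_sv_s^T$ with $\hat\rho_s=1/(v_s^T\hat r_s)$, $\hat Z_s=I-\hat\rho_s\hat r_sv_s^T$). Assumption A: for every $\tilde\theta\in\Theta^L$ the function $w\mapsto\hat f(w,\tilde\theta)$ is twice differentiable and there are constants $0<\tilde m\le\tilde M<\infty$ with $\tilde mI\preceq\nabla_w^2\hat f(w,\tilde\theta)\preceq\tilde MI$ for all $w$ and all $\tilde\theta$. *)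

theory Defs
  imports "HOL-Analysis.Analysis"
begin

definition fhat :: "(real^'n \<Rightarrow> 'th \<Rightarrow> real) \<Rightarrow> nat \<Rightarrow> (nat \<Rightarrow> 'th) \<Rightarrow> real^'n \<Rightarrow> real" where
  "fhat f L th w = (1 / real L) * (\<Sum>l<L. f w (th l))"

definition shat :: "(real^'n \<Rightarrow> 'th \<Rightarrow> real^'n) \<Rightarrow> nat \<Rightarrow> (nat \<Rightarrow> 'th) \<Rightarrow> real^'n \<Rightarrow> real^'n" where
  "shat g L th w = (1 / real L) *\<^sub>R (\<Sum>l<L. g w (th l))"

definition outer :: "real^'n \<Rightarrow> real^'n \<Rightarrow> real^'n^'n" where
  "outer x y = (\<chi> i j. x $ i * y $ j)"

definition olbfgs_v :: "(nat \<Rightarrow> real^'n) \<Rightarrow> nat \<Rightarrow> real^'n" where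
  "olbfgs_v w t = w (Suc t) - w t"

definition olbfgs_r :: "(real^'n \<Rightarrow> 'th \<Rightarrow> real^'n) \<Rightarrow> nat \<Rightarrow> (nat \<Rightarrow> nat \<Rightarrow> 'th) \<Rightarrow> (nat \<Rightarrow> real^'n) \<Rightarrow> nat \<Rightarrow> real^'n" where
  "olbfgs_r g L ths w t = shat g L (ths t) (w (Suc t)) - shat g L (ths t) (w t)"

definition olbfgs_gamma :: "(real^'n \<Rightarrow> 'th \<Rightarrow> real^'n) \<Rightarrow> nat \<Rightarrow> (nat \<Rightarrow> nat \<Rightarrow> 'th) \<Rightarrow> (nat \<Rightarrow> real^'n) \<Rightarrow> nat \<Rightarrow> real" where
  "olbfgs_gamma g L ths w t =
     (if t = 0 then 1
      else (olbfgs_v w (t - 1) \<bullet> olbfgs_r g L ths w (t - 1)) / (norm (olbfgs_r g L ths w (t - 1)))\<^sup>2)"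

definition bfgs_update :: "real^'n^'n \<Rightarrow> real^'n \<Rightarrow> real^'n \<Rightarrow> real^'n^'n" where
  "bfgs_update B v r =
     B - (1 / (v \<bullet> (B *v v))) *\<^sub>R outer (B *v v) (v v* B) + (1 / (v \<bullet> r)) *\<^sub>R outer r r"

primrec olbfgs_Bu :: "(real^'n \<Rightarrow> 'th \<Rightarrow> real^'n) \<Rightarrow> nat \<Rightarrow> (nat \<Rightarrow> nat \<Rightarrow> 'th) \<Rightarrow> nat \<Rightarrow> (nat \<Rightarrow> real^'n) \<Rightarrow> nat \<Rightarrow> nat \<Rightarrow> real^'n^'n" where
  "olbfgs_Bu g L ths tau w t 0 = inverse (olbfgs_gamma g L ths w t) *\<^sub>R mat 1"
| "olbfgs_Bu g L ths tau w t (Suc u) =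
     bfgs_update (olbfgs_Bu g L ths tau w t u)
       (olbfgs_v w (t - min tau t + u)) (olbfgs_r g L ths w (t - min tau t + u))"

definition olbfgs_B :: "(real^'n \<Rightarrow> 'th \<Rightarrow> real^'n) \<Rightarrow> nat \<Rightarrow> (nat \<Rightarrow> nat \<Rightarrow> 'th) \<Rightarrow> nat \<Rightarrow> (nat \<Rightarrow> real^'n) \<Rightarrow> nat \<Rightarrow> real^'n^'n" where
  "olbfgs_B g L ths tau w t = olbfgs_Bu g L ths tau w t (min tau t)"

end

theory Submission
  imports Defs
begin

(*
  Each pair (v_s, r_s) of oLBFGS satisfies m |v|^2 <= v.r and |r|^2 <= M v.r, by the mean value
  theorem applied to the averaged stochastic gradient, whose derivative is symmetric with spectrum
  in [m, M]; in particular the initial scaling gamma_t^-1 = |r|^2 / v.r lies in [m, M].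
  A BFGS update B' of a positive definite B stays positive definite, has
  tr B' = tr B - |Bv|^2 / v.Bv + |r|^2 / v.r <= tr B + M, and, by the matrix determinant lemma,
  det B' = det B * v.r / v.Bv >= det B * m / tr B, because v.Bv <= tr B |v|^2.
  After at most tau updates of gamma_t^-1 I the trace is therefore at most (n + tau) M, and every
  update shrinks the determinant by at most the factor m / ((n + tau) M).
*)

section \<open>Matrix identities\<close>

lemma transpose_add: "transpose (A + B) = transpose A + transpose (B :: 'a::plus^'n^'m)"
  by (simp add: transpose_def vec_eq_iff)

lemma transpose_diff: "transpose (A - B) = transpose A - transpose (B :: 'a::minus^'n^'m)"
  by (simp add: transpose_def vec_eq_iff)

lemma trace_scaleR: "trace (c *\<^sub>R A) = c * trace (A :: real^'n^'n)"
  by (simp add: trace_def sum_distrib_left)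

lemma det_scaleR_id: "det (c *\<^sub>R mat 1 :: real^'n^'n) = c ^ CARD('n)"
proof -
  have "c *\<^sub>R mat 1 = (matrix ((*\<^sub>R) c) :: real^'n^'n)"
    by (simp add: matrix_scaleR vec_eq_iff mat_def)
  then show ?thesis by simp
qed

lemma outer_mult_vec: "outer a b *v z = (b \<bullet> z) *\<^sub>R (a :: real^'n)"
  by (simp add: outer_def matrix_vector_mult_def inner_vec_def vec_eq_iff sum_distrib_left mult_ac)

lemma transpose_outer: "transpose (outer a b) = outer b a"
  by (simp add: transpose_def outer_def vec_eq_iff)

lemma trace_outer: "trace (outer a b) = (a :: real^'n) \<bullet> b"
  by (simp add: trace_def outer_def inner_vec_def)

text \<open>Row \<open>k\<close> of \<open>I + e\<^sub>k z\<^sup>T\<close> is the combination of the rows of \<open>I\<close> with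
  coefficients \<open>z + e\<^sub>k\<close>.\<close>
lemma det_id_plus_outer_axis: "det (mat 1 + outer (axis k 1) z) = 1 + (z :: real^'n) $ k"
proof -
  have row_id: "row j (mat 1 :: real^'n^'n) = axis j 1" for j
    by (simp add: row_def mat_def axis_def vec_eq_iff)
  have "mat 1 + outer (axis k 1) z
      = (\<chi> i. if i = k then sum (\<lambda>j. (z + axis k 1) $ j *s row j (mat 1)) UNIV else row i (mat 1))"
    unfolding row_id basis_expansion
    by (simp add: vec_eq_iff outer_def mat_def axis_def)
  then show ?thesis by (simp add: cramer_lemma_transpose)
qed

text \<open>For \<open>x $ k \<noteq> 0\<close>, the matrix \<open>D = I + u e\<^sub>k\<^sup>T\<close>
  with \<open>D e\<^sub>k = x / x $ k\<close> has determinant 1 and conjugates \<open>I + x y\<^sup>T\<close> to a matrix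
  that differs from the identity only in row \<open>k\<close>.\<close>
lemma det_id_plus_outer: "det (mat 1 + outer x y) = 1 + (x :: real^'n) \<bullet> y"
proof (cases "x = 0")
  case True
  then have "outer x y = 0" by (simp add: outer_def vec_eq_iff)
  then show ?thesis using True by simp
next
  case False
  then obtain k where xk: "x $ k \<noteq> 0" by (auto simp: vec_eq_iff)
  define e :: "real^'n" where "e = axis k 1"
  define u where "u = (1 / x $ k) *\<^sub>R x - e"
  define z where "z = x $ k *\<^sub>R (y + (y \<bullet> u) *\<^sub>R e)"
  define D where "D = mat 1 + outer u e"
  have "det (transpose D) = 1 + u $ k"
    unfolding D_def e_def transpose_add transpose_outer transpose_mat
    by (rule det_id_plus_outer_axis)
  also have "u $ k = 0" using xk by (simp add: u_def e_def)
  finally have det_D: "det D = 1" by simp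
  have "(mat 1 + outer x y) ** D = D ** (mat 1 + outer e z)"
  proof (rule iffD2[OF matrix_eq], intro allI)
    fix v
    show "((mat 1 + outer x y) ** D) *v v = (D ** (mat 1 + outer e z)) *v v"
      using xk by (simp add: matrix_vector_mul_assoc[symmetric] D_def algebra_simps outer_mult_vec
          z_def u_def e_def)
  qed
  then have "det (mat 1 + outer x y) = 1 + z $ k"
    using det_mul det_D det_id_plus_outer_axis[of k z] e_def by (metis mult_1_right mult_1)
  also have "z $ k = x \<bullet> y"
    using xk by (simp add: z_def u_def e_def inner_diff_right inner_axis inner_commute)
  finally show ?thesis .
qed

section \<open>Positive definite matrices\<close>

definition pos_def_matrix :: "real^'n^'n \<Rightarrow> bool" where
  "pos_def_matrix B \<longleftrightarrow> transpose B = B \<and> (\<forall>x. x \<noteq> 0 \<longrightarrow> 0 < x \<bullet> (B *v x))"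

lemma inner_mult_vec_symmetric:
  assumes "transpose B = B"
  shows "x \<bullet> (B *v y) = y \<bullet> ((B :: real^'n^'n) *v x)"
  by (metis assms dot_lmul_matrix inner_commute transpose_matrix_vector)

lemma vector_mult_symmetric:
  assumes "transpose B = B"
  shows "v v* B = (B :: real^'n^'n) *v v"
  by (metis assms transpose_matrix_vector)

lemma pos_def_matrix_nonneg: "pos_def_matrix B \<Longrightarrow> 0 \<le> x \<bullet> (B *v x)"
  unfolding pos_def_matrix_def by (cases "x = 0") (auto intro: less_imp_le)

lemma pos_def_matrix_solvable:
  assumes "pos_def_matrix B"
  obtains q where "B *v q = r"
proof -
  have "\<forall>x. B *v x = 0 \<longrightarrow> x = 0"
    using assms unfolding pos_def_matrix_def by (metis inner_zero_right less_irrefl)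
  then obtain C where "C ** B = mat 1" using matrix_left_invertible_ker by blast
  then have "B *v (C *v r) = r"
    by (simp add: matrix_left_right_inverse matrix_vector_mul_assoc)
  then show ?thesis by (rule that)
qed

lemma axis_inner_mult_vec_axis: "axis i 1 \<bullet> ((B :: real^'n^'n) *v axis j 1) = B $ i $ j"
proof -
  have "B *v axis j 1 = (\<chi> k. B $ k $ j)"
    by (simp add: matrix_vector_mult_def axis_def vec_eq_iff if_distrib[of "\<lambda>x. _ * x"] cong: if_cong)
  then show ?thesis by (simp add: inner_axis')
qed

text \<open>Sum the nonnegative quadratic forms at \<open>v$j e\<^sub>i - v$i e\<^sub>j\<close> over all \<open>i, j\<close>.\<close>
lemma quadratic_form_le_trace:
  fixes B :: "real^'n^'n"
  assumes sym: "transpose B = B" and psd: "\<And>x. 0 \<le> x \<bullet> (B *v x)"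
  shows "v \<bullet> (B *v v) \<le> trace B * (norm v)\<^sup>2"
proof -
  have B_sym: "B $ j $ i = B $ i $ j" for i j
    using sym by (metis transpose_def vec_lambda_beta)
  define d where "d i j = v$j *\<^sub>R axis i (1::real) - v$i *\<^sub>R axis j 1" for i j
  have form_d: "d i j \<bullet> (B *v d i j) = (v$j)\<^sup>2 * B$i$i + (v$i)\<^sup>2 * B$j$j - 2 * (v$i * v$j * B$i$j)"
    for i j
    unfolding d_def
    by (simp add: algebra_simps axis_inner_mult_vec_axis B_sym[of i j] power2_eq_square)
  have norm_v: "(norm v)\<^sup>2 = (\<Sum>j\<in>UNIV. (v$j)\<^sup>2)"
    unfolding power2_norm_eq_inner inner_vec_def by (simp add: power2_eq_square)
  have diag: "(\<Sum>i\<in>UNIV. \<Sum>j\<in>UNIV. (v$j)\<^sup>2 * B$i$i) = trace B * (norm v)\<^sup>2"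
    unfolding norm_v trace_def by (simp add: sum_product mult.commute)
  have diag': "(\<Sum>i\<in>UNIV. \<Sum>j\<in>UNIV. (v$i)\<^sup>2 * B$j$j) = trace B * (norm v)\<^sup>2"
    using diag by (subst sum.swap) simp
  have cross: "(\<Sum>i\<in>UNIV. \<Sum>j\<in>UNIV. 2 * (v$i * v$j * B$i$j)) = 2 * (v \<bullet> (B *v v))"
    by (simp add: inner_vec_def matrix_vector_mult_def sum_distrib_left mult_ac)
  have "0 \<le> (\<Sum>i\<in>UNIV. \<Sum>j\<in>UNIV. d i j \<bullet> (B *v d i j))"
    by (intro sum_nonneg psd)
  also have "\<dots> = 2 * (trace B * (norm v)\<^sup>2) - 2 * (v \<bullet> (B *v v))"
    unfolding form_d by (simp add: sum.distrib sum_subtractf sum_distrib_left diag diag' cross)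
  finally show ?thesis by simp
qed

section \<open>The BFGS update\<close>

lemma bfgs_update_mult_vec:
  assumes "transpose B = B"
  shows "bfgs_update B v r *v x = B *v x - (((B *v v) \<bullet> x) / (v \<bullet> (B *v v))) *\<^sub>R (B *v v)
           + ((r \<bullet> x) / (v \<bullet> r)) *\<^sub>R r"
  by (simp add: bfgs_update_def matrix_vector_mult_add_rdistrib matrix_vector_mult_diff_rdistrib
      scaleR_matrix_vector_assoc[symmetric] outer_mult_vec vector_mult_symmetric[OF assms])

lemma transpose_bfgs_update:
  assumes "transpose B = B"
  shows "transpose (bfgs_update B v r) = bfgs_update B v r"
  by (simp add: bfgs_update_def transpose_add transpose_diff transpose_scalar transpose_outer
      vector_mult_symmetric[OF assms] assms)

lemma trace_bfgs_update:
  assumes "transpose B = B"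
  shows "trace (bfgs_update B v r)
           = trace B - (norm (B *v v))\<^sup>2 / (v \<bullet> (B *v v)) + (norm r)\<^sup>2 / (v \<bullet> r)"
  by (simp add: bfgs_update_def trace_add trace_sub trace_scaleR trace_outer
      vector_mult_symmetric[OF assms] power2_norm_eq_inner)

text \<open>The quadratic form of the update at \<open>x\<close> is \<open>y\<^sup>T B y + (r \<bullet> x)\<^sup>2 / (v \<bullet> r)\<close>
  with \<open>y = x - ((B v \<bullet> x) / (v \<bullet> B v)) v\<close>.\<close>
lemma bfgs_update_pos_def:
  assumes B: "pos_def_matrix B" and v: "v \<noteq> 0" and vr: "0 < v \<bullet> r"
  shows "pos_def_matrix (bfgs_update B v r)"
proof -
  have sym: "transpose B = B" using B by (simp add: pos_def_matrix_def)
  define \<beta> where "\<beta> = v \<bullet> (B *v v)"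
  have \<beta>: "\<beta> > 0" using B v by (simp add: pos_def_matrix_def \<beta>_def)
  have "0 < x \<bullet> (bfgs_update B v r *v x)" if x: "x \<noteq> 0" for x
  proof -
    define y where "y = x - (((B *v v) \<bullet> x) / \<beta>) *\<^sub>R v"
    have "x \<bullet> (bfgs_update B v r *v x) = y \<bullet> (B *v y) + (r \<bullet> x)\<^sup>2 / (v \<bullet> r)"
      using \<beta> inner_mult_vec_symmetric[OF sym, of v x]
      by (simp add: bfgs_update_mult_vec[OF sym] y_def \<beta>_def[symmetric]
          algebra_simps power2_eq_square field_simps inner_commute)
    moreover have "0 \<le> y \<bullet> (B *v y)" by (rule pos_def_matrix_nonneg[OF B])
    moreover have "y \<bullet> (B *v y) = 0 \<Longrightarrow> r \<bullet> x \<noteq> 0"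
    proof
      assume "y \<bullet> (B *v y) = 0" and rx: "r \<bullet> x = 0"
      then have "y = 0" using B by (auto simp: pos_def_matrix_def)
      then have x_eq: "x = (((B *v v) \<bullet> x) / \<beta>) *\<^sub>R v" by (simp add: y_def)
      then have "r \<bullet> x = (((B *v v) \<bullet> x) / \<beta>) * (v \<bullet> r)" by (metis inner_commute inner_scaleR_right)
      then have "(B *v v) \<bullet> x = 0" using rx vr \<beta> by simp
      then show False using x x_eq by simp
    qed
    moreover have "0 \<le> (r \<bullet> x)\<^sup>2 / (v \<bullet> r)" and "r \<bullet> x \<noteq> 0 \<Longrightarrow> 0 < (r \<bullet> x)\<^sup>2 / (v \<bullet> r)"
      using vr by simp_all
    ultimately show ?thesis by (cases "y \<bullet> (B *v y) = 0") auto
  qed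
  then show ?thesis
    unfolding pos_def_matrix_def using transpose_bfgs_update[OF sym] by blast
qed

text \<open>With \<open>B q = r\<close>, the update factors as \<open>B (I - v y\<^sup>T) (I + q r\<^sup>T / (v \<bullet> r))\<close> for a
  suitable \<open>y\<close>; the matrix determinant lemma evaluates both rank-one factors.\<close>
lemma det_bfgs_update:
  assumes B: "pos_def_matrix B" and v: "v \<noteq> 0" and vr: "0 < v \<bullet> r"
  shows "det (bfgs_update B v r) = det B * (v \<bullet> r) / (v \<bullet> (B *v v))"
proof -
  have sym: "transpose B = B" using B by (simp add: pos_def_matrix_def)
  define \<beta> where "\<beta> = v \<bullet> (B *v v)"
  have \<beta>: "\<beta> > 0" using B v by (simp add: pos_def_matrix_def \<beta>_def)
  obtain q where Bq: "B *v q = r" using pos_def_matrix_solvable[OF B] .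
  define c where "c = (1 / (v \<bullet> r)) *\<^sub>R r"
  define a where "a = (1 / \<beta>) *\<^sub>R (B *v v)"
  define g where "g = 1 + c \<bullet> q"
  have "0 \<le> r \<bullet> q" using pos_def_matrix_nonneg[OF B, of q] Bq by (simp add: inner_commute)
  then have g: "g > 0" unfolding g_def c_def using vr by (simp add: add_pos_nonneg)
  define y where "y = a - ((a \<bullet> q) / g) *\<^sub>R c"
  have aq: "a \<bullet> q = (v \<bullet> r) / \<beta>"
    unfolding a_def using inner_mult_vec_symmetric[OF sym, of q v] Bq by (simp add: inner_commute)
  have yq: "y \<bullet> q = (a \<bullet> q) / g"
    using g unfolding y_def g_def by (simp add: inner_diff_left field_simps)
  have factor: "bfgs_update B v r = B ** ((mat 1 + outer (- v) y) ** (mat 1 + outer q c))"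
  proof (rule iffD2[OF matrix_eq], intro allI)
    fix x
    have "B ** ((mat 1 + outer (- v) y) ** (mat 1 + outer q c)) *v x
        = B *v x + (c \<bullet> x) *\<^sub>R r - (y \<bullet> x + (c \<bullet> x) * (y \<bullet> q)) *\<^sub>R (B *v v)"
      by (simp add: matrix_vector_mul_assoc[symmetric] algebra_simps outer_mult_vec Bq)
    also have "y \<bullet> x + (c \<bullet> x) * (y \<bullet> q) = ((B *v v) \<bullet> x) / \<beta>"
      unfolding yq using g unfolding y_def a_def by (simp add: inner_diff_left field_simps)
    finally show "bfgs_update B v r *v x = B ** ((mat 1 + outer (- v) y) ** (mat 1 + outer q c)) *v x"
      unfolding bfgs_update_mult_vec[OF sym] \<beta>_def c_def by (simp add: algebra_simps)
  qed
  have "1 + (- v) \<bullet> y = (a \<bullet> q) / g"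
    using \<beta> vr by (simp add: y_def inner_diff_right a_def c_def \<beta>_def)
  then have "det (bfgs_update B v r) = det B * ((a \<bullet> q) / g * g)"
    unfolding factor det_mul det_id_plus_outer by (simp add: g_def inner_commute)
  then show ?thesis using g \<beta> by (simp add: aq \<beta>_def)
qed

section \<open>Curvature pairs\<close>

definition curvature_pair :: "real \<Rightarrow> real \<Rightarrow> 'a::real_inner \<Rightarrow> 'a \<Rightarrow> bool" where
  "curvature_pair m M v r \<longleftrightarrow> v \<noteq> 0 \<and> m * (norm v)\<^sup>2 \<le> v \<bullet> r \<and> (norm r)\<^sup>2 \<le> M * (v \<bullet> r)"

lemma curvature_pair_inner_pos: "0 < m \<Longrightarrow> curvature_pair m M v r \<Longrightarrow> 0 < v \<bullet> r"
  unfolding curvature_pair_def by (smt (verit) mult_pos_pos zero_less_norm_iff zero_less_power)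

lemma curvature_pair_ratio:
  assumes m: "0 < m" and vr: "curvature_pair m M v r"
  shows "m \<le> (norm r)\<^sup>2 / (v \<bullet> r)" and "(norm r)\<^sup>2 / (v \<bullet> r) \<le> M"
proof -
  have pos: "0 < v \<bullet> r" by (rule curvature_pair_inner_pos[OF m vr])
  have cs: "v \<bullet> r \<le> norm v * norm r" by (rule norm_cauchy_schwarz)
  have "m * norm v * norm v \<le> v \<bullet> r"
    using vr by (simp add: curvature_pair_def power2_eq_square mult.assoc)
  also have "\<dots> \<le> norm r * norm v" using cs by (simp add: mult.commute)
  finally have "m * norm v \<le> norm r"
    using vr by (simp add: curvature_pair_def)
  have "m * (v \<bullet> r) \<le> m * (norm v * norm r)" using cs m by simp
  also have "\<dots> \<le> norm r * norm r"
    using \<open>m * norm v \<le> norm r\<close> by (simp add: mult.assoc[symmetric] mult_right_mono)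
  finally have "m * (v \<bullet> r) \<le> norm r * norm r" .
  then show "m \<le> (norm r)\<^sup>2 / (v \<bullet> r)"
    using pos by (simp add: field_simps power2_eq_square)
  show "(norm r)\<^sup>2 / (v \<bullet> r) \<le> M"
    using vr pos by (simp add: curvature_pair_def field_simps)
qed

lemma mean_value_inner:
  fixes F :: "'a::real_normed_vector \<Rightarrow> 'b::real_inner"
  assumes deriv: "\<And>x. (F has_derivative F' x) (at x)"
  obtains z where "k \<bullet> (F (a + v) - F a) = k \<bullet> F' (a + z *\<^sub>R v) v"
proof -
  have "((\<lambda>s. k \<bullet> F (a + s *\<^sub>R v)) has_real_derivative (k \<bullet> F' (a + s *\<^sub>R v) v)) (at s)" for s
  proof -
    have "((\<lambda>s. a + s *\<^sub>R v) has_derivative (\<lambda>h. h *\<^sub>R v)) (at s)"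
      by (auto intro!: derivative_eq_intros)
    then have "((\<lambda>s. F (a + s *\<^sub>R v)) has_derivative (\<lambda>h. F' (a + s *\<^sub>R v) (h *\<^sub>R v))) (at s)"
      using deriv by (rule has_derivative_compose)
    then have "((\<lambda>s. k \<bullet> F (a + s *\<^sub>R v)) has_derivative (\<lambda>h. k \<bullet> F' (a + s *\<^sub>R v) (h *\<^sub>R v))) (at s)"
      by (rule has_derivative_inner_right)
    moreover have "(\<lambda>h. k \<bullet> F' (a + s *\<^sub>R v) (h *\<^sub>R v)) = (*) (k \<bullet> F' (a + s *\<^sub>R v) v)"
      using linear_cmul[OF has_derivative_linear[OF deriv]] by (auto simp: fun_eq_iff)
    ultimately show ?thesis by (simp add: has_field_derivative_def)
  qed
  then have "\<exists>z>0. z < 1 \<and> k \<bullet> F (a + 1 *\<^sub>R v) - k \<bullet> F (a + 0 *\<^sub>R v) = (1 - 0) * (k \<bullet> F' (a + z *\<^sub>R v) v)"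
    by (intro MVT2) auto
  then show ?thesis using that by (auto simp: inner_diff_right)
qed

text \<open>Expand \<open>0 \<le> (r - M v) \<bullet> D (r - M v)\<close> and use \<open>r \<bullet> D r \<le> M \<parallel>r\<parallel>\<^sup>2\<close>.\<close>
lemma symmetric_form_cross_bound:
  fixes D :: "'a::real_inner \<Rightarrow> 'a"
  assumes lin: "linear D" and sym: "\<And>y z. y \<bullet> D z = z \<bullet> D y"
    and nonneg: "\<And>y. 0 \<le> y \<bullet> D y" and upper: "\<And>y. y \<bullet> D y \<le> M * (norm y)\<^sup>2" and M: "0 < M"
  shows "2 * (r \<bullet> D v) - M * (v \<bullet> D v) \<le> (norm r)\<^sup>2"
proof -
  have "0 \<le> (r - M *\<^sub>R v) \<bullet> D (r - M *\<^sub>R v)" by (rule nonneg)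
  also have "\<dots> = r \<bullet> D r - 2 * M * (r \<bullet> D v) + M * M * (v \<bullet> D v)"
    using sym[of v r] by (simp add: linear_diff[OF lin] linear_cmul[OF lin] algebra_simps)
  finally have "M * (2 * (r \<bullet> D v) - M * (v \<bullet> D v)) \<le> M * (norm r)\<^sup>2"
    using upper[of r] by (simp add: algebra_simps)
  then show ?thesis using M by simp
qed

lemma curvature_pair_secant:
  fixes F :: "'a::real_inner \<Rightarrow> 'a"
  assumes deriv: "\<And>x. \<exists>D. (F has_derivative D) (at x) \<and> (\<forall>y z. y \<bullet> D z = z \<bullet> D y)
                 \<and> (\<forall>y. m * (norm y)\<^sup>2 \<le> y \<bullet> D y \<and> y \<bullet> D y \<le> M * (norm y)\<^sup>2)"
    and m: "0 \<le> m" and M: "0 < M" and v: "v \<noteq> 0"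
  shows "curvature_pair m M v (F (a + v) - F a)"
proof -
  obtain F' where F': "\<And>x. (F has_derivative F' x) (at x) \<and> (\<forall>y z. y \<bullet> F' x z = z \<bullet> F' x y)
                 \<and> (\<forall>y. m * (norm y)\<^sup>2 \<le> y \<bullet> F' x y \<and> y \<bullet> F' x y \<le> M * (norm y)\<^sup>2)"
    using deriv by metis
  define r where "r = F (a + v) - F a"
  have lower: "m * (norm v)\<^sup>2 \<le> v \<bullet> r"
    using mean_value_inner[of F F' v a v] F' unfolding r_def by metis
  obtain z where z: "(r - (M / 2) *\<^sub>R v) \<bullet> r = (r - (M / 2) *\<^sub>R v) \<bullet> F' (a + z *\<^sub>R v) v"
    using mean_value_inner[of F F' "r - (M / 2) *\<^sub>R v" a v] F' unfolding r_def by metis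
  define D where "D = F' (a + z *\<^sub>R v)"
  have "2 * (r \<bullet> D v) - M * (v \<bullet> D v) \<le> (norm r)\<^sup>2"
  proof (rule symmetric_form_cross_bound[OF _ _ _ _ M])
    show "linear D" unfolding D_def using F' has_derivative_linear by blast
    show "y \<bullet> D w = w \<bullet> D y" "y \<bullet> D y \<le> M * (norm y)\<^sup>2" for y w
      unfolding D_def using F' by blast+
    show "0 \<le> y \<bullet> D y" for y
      unfolding D_def using F' m by (meson order_trans zero_le_mult_iff zero_le_power2)
  qed
  then have "(norm r)\<^sup>2 \<le> M * (v \<bullet> r)"
    using z unfolding D_def[symmetric]
    by (simp add: inner_diff_left power2_norm_eq_inner inner_commute[of v r] field_simps)
  then show ?thesis using lower v unfolding curvature_pair_def r_def by blast
qed

section \<open>Limited-memory bounds\<close>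

lemma bfgs_update_bounds:
  assumes B: "pos_def_matrix B" and det_B: "0 \<le> det B" and m: "0 < m"
    and vr: "curvature_pair m M v r"
  shows "pos_def_matrix (bfgs_update B v r)"
    and "trace (bfgs_update B v r) \<le> trace B + M"
    and "0 < trace B" and "m * det B / trace B \<le> det (bfgs_update B v r)"
proof -
  have sym: "transpose B = B" using B by (simp add: pos_def_matrix_def)
  have v: "v \<noteq> 0" using vr by (simp add: curvature_pair_def)
  have pos: "0 < v \<bullet> r" by (rule curvature_pair_inner_pos[OF m vr])
  define \<beta> where "\<beta> = v \<bullet> (B *v v)"
  have \<beta>: "0 < \<beta>" using B v by (simp add: pos_def_matrix_def \<beta>_def)
  have \<beta>_le: "\<beta> \<le> trace B * (norm v)\<^sup>2"
    unfolding \<beta>_def using sym pos_def_matrix_nonneg[OF B] by (rule quadratic_form_le_trace)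
  show "pos_def_matrix (bfgs_update B v r)" by (rule bfgs_update_pos_def[OF B v pos])
  have "0 \<le> (norm (B *v v))\<^sup>2 / \<beta>" using \<beta> by simp
  then show "trace (bfgs_update B v r) \<le> trace B + M"
    using curvature_pair_ratio(2)[OF m vr] by (simp add: trace_bfgs_update[OF sym] \<beta>_def)
  show tr: "0 < trace B"
  proof (rule ccontr)
    assume "\<not> 0 < trace B"
    then have "trace B * (norm v)\<^sup>2 \<le> 0" by (simp add: mult_nonpos_nonneg)
    then show False using \<beta> \<beta>_le by linarith
  qed
  have "m / trace B \<le> (v \<bullet> r) / \<beta>"
  proof -
    have "m * \<beta> \<le> trace B * (m * (norm v)\<^sup>2)" using \<beta>_le m by simp
    also have "\<dots> \<le> trace B * (v \<bullet> r)"
      using vr tr by (intro mult_left_mono) (auto simp: curvature_pair_def)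
    finally show ?thesis using tr \<beta> by (simp add: field_simps)
  qed
  then have "det B * (m / trace B) \<le> det B * ((v \<bullet> r) / \<beta>)"
    using det_B by (rule mult_left_mono)
  then show "m * det B / trace B \<le> det (bfgs_update B v r)"
    by (simp add: det_bfgs_update[OF B v pos] \<beta>_def mult.commute)
qed

lemma bfgs_iterates_bounds:
  fixes B :: "nat \<Rightarrow> real^'n^'n" and v r :: "nat \<Rightarrow> real^'n" and m M c :: real
  assumes m: "0 < m" and c: "m \<le> c" "c \<le> M"
    and B0: "B 0 = c *\<^sub>R mat 1"
    and step: "\<And>u. u < k \<Longrightarrow> B (Suc u) = bfgs_update (B u) (v u) (r u)"
    and pairs: "\<And>u. u < k \<Longrightarrow> curvature_pair m M (v u) (r u)"
  shows "u \<le> k \<Longrightarrow> pos_def_matrix (B u) \<and> trace (B u) \<le> (real CARD('n) + real u) * M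
           \<and> m ^ CARD('n) * (m / ((real CARD('n) + real k) * M)) ^ u \<le> det (B u)"
proof (induction u)
  case 0
  have "0 < c" using m c by simp
  then have "pos_def_matrix (B 0)"
    by (simp add: B0 pos_def_matrix_def transpose_scalar scaleR_matrix_vector_assoc[symmetric])
  moreover have "trace (B 0) \<le> (real CARD('n) + real 0) * M"
    using c by (simp add: B0 trace_scaleR trace_I mult.commute)
  moreover have "m ^ CARD('n) * (m / ((real CARD('n) + real k) * M)) ^ 0 \<le> det (B 0)"
    using power_mono[OF c(1), of "CARD('n)"] m by (simp add: B0 det_scaleR_id)
  ultimately show ?case by blast
next
  case (Suc u)
  let ?\<rho> = "m / ((real CARD('n) + real k) * M)"
  have u: "u < k" using Suc.prems by simp
  have IH: "pos_def_matrix (B u)" "trace (B u) \<le> (real CARD('n) + real u) * M"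
    "m ^ CARD('n) * ?\<rho> ^ u \<le> det (B u)"
    using Suc u by auto
  have M: "0 < M" using m c by simp
  have "0 \<le> m ^ CARD('n) * ?\<rho> ^ u" using m M by simp
  then have det_nonneg: "0 \<le> det (B u)" using IH(3) by linarith
  note bounds = bfgs_update_bounds[OF IH(1) det_nonneg m pairs[OF u], folded step[OF u]]
  have "(real CARD('n) + real u) * M \<le> (real CARD('n) + real k) * M"
    using u M by (intro mult_right_mono) auto
  then have tr_k: "trace (B u) \<le> (real CARD('n) + real k) * M" using IH(2) by linarith
  have "m ^ CARD('n) * ?\<rho> ^ Suc u
      = m * (m ^ CARD('n) * ?\<rho> ^ u) / ((real CARD('n) + real k) * M)"
    by simp
  also have "\<dots> \<le> m * det (B u) / ((real CARD('n) + real k) * M)"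
    using IH(3) m M by (intro divide_right_mono mult_left_mono) auto
  also have "\<dots> \<le> m * det (B u) / trace (B u)"
    using tr_k bounds(3) m det_nonneg by (intro divide_left_mono) auto
  also have "\<dots> \<le> det (B (Suc u))" by (rule bounds(4))
  finally show ?case using bounds(1,2) IH(2) by (simp add: algebra_simps)
qed

lemma olbfgs_curvature_pair:
  assumes A: "\<And>th x. \<exists>D. (shat g L th has_derivative D) (at x)
                 \<and> (\<forall>y z. y \<bullet> D z = z \<bullet> D y)
                 \<and> (\<forall>y. m * (norm y)\<^sup>2 \<le> y \<bullet> D y \<and> y \<bullet> D y \<le> M * (norm y)\<^sup>2)"
    and m: "0 \<le> m" and M: "0 < M" and w: "w (Suc s) \<noteq> w s"
  shows "curvature_pair m M (olbfgs_v w s) (olbfgs_r g L ths w s)"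
proof -
  have "olbfgs_v w s \<noteq> 0" using w by (simp add: olbfgs_v_def)
  from curvature_pair_secant[where F="shat g L (ths s)" and a="w s", OF A m M this]
  show ?thesis by (simp add: olbfgs_v_def olbfgs_r_def)
qed

lemma power_ratio_bound_mono:
  fixes m M :: real and n k tau :: nat
  assumes m: "0 < m" "m \<le> M" and n: "1 \<le> n" and k: "k \<le> tau"
  shows "m ^ (n + tau) / ((real n + real tau) * M) ^ tau \<le> m ^ n * (m / ((real n + real k) * M)) ^ k"
proof -
  define \<rho> where "\<rho> = m / ((real n + real tau) * M)"
  have "0 \<le> \<rho>" using m by (simp add: \<rho>_def)
  moreover have "\<rho> \<le> 1"
    using m n mult_right_mono[of 1 "real n + real tau" M] by (simp add: \<rho>_def field_simps)
  ultimately have "\<rho> ^ tau \<le> \<rho> ^ k" by (rule power_decreasing[OF k])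
  also have "\<rho> \<le> m / ((real n + real k) * M)"
    using m n k by (simp add: \<rho>_def frac_le mult_right_mono)
  then have "\<rho> ^ k \<le> (m / ((real n + real k) * M)) ^ k" using \<open>0 \<le> \<rho>\<close> by (rule power_mono)
  finally have "m ^ n * \<rho> ^ tau \<le> m ^ n * (m / ((real n + real k) * M)) ^ k"
    using m by (simp add: mult_left_mono)
  then show ?thesis by (simp add: \<rho>_def power_add power_divide)
qed

theorem lemma3:
  fixes f :: "real^'n \<Rightarrow> 'th \<Rightarrow> real"
    and g :: "real^'n \<Rightarrow> 'th \<Rightarrow> real^'n"
    and L tau :: nat
    and m M :: real
    and ths :: "nat \<Rightarrow> nat \<Rightarrow> 'th"
    and eps :: "nat \<Rightarrow> real"
    and w :: "nat \<Rightarrow> real^'n"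
    and t :: nat
  assumes L: "L \<ge> 1" and tau: "tau \<ge> 1"
    and grad: "\<And>x th. ((\<lambda>y. f y th) has_derivative (\<lambda>h. g x th \<bullet> h)) (at x)"
    and mM: "0 < m" "m \<le> M"
    and A: "\<And>th x. \<exists>D. (shat g L th has_derivative D) (at x)
                 \<and> (\<forall>y z. y \<bullet> D z = z \<bullet> D y)
                 \<and> (\<forall>y. m * (norm y)\<^sup>2 \<le> y \<bullet> D y \<and> y \<bullet> D y \<le> M * (norm y)\<^sup>2)"
    and eps: "\<And>s. eps s > 0"
    and iter: "\<And>s. w (Suc s) = w s - eps s *\<^sub>R
                 (matrix_inv (olbfgs_B g L ths tau w s) *v shat g L (ths s) (w s))"
    and nondeg: "\<And>s. s < t \<Longrightarrow> w (Suc s) \<noteq> w s"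
    and t: "t \<ge> 1"
  shows "trace (olbfgs_B g L ths tau w t) \<le> (real CARD('n) + real tau) * M
       \<and> det (olbfgs_B g L ths tau w t)
           \<ge> m ^ (CARD('n) + tau) / ((real CARD('n) + real tau) * M) ^ tau"
proof -
  let ?v = "olbfgs_v w" and ?r = "olbfgs_r g L ths w" and ?B = "olbfgs_Bu g L ths tau w t"
  define k where "k = min tau t"
  have M: "0 < M" using mM by linarith
  have pair: "curvature_pair m M (?v s) (?r s)" if "s < t" for s
    using olbfgs_curvature_pair[OF A less_imp_le[OF mM(1)] M nondeg[OF that]] .
  define c where "c = (norm (?r (t - 1)))\<^sup>2 / (?v (t - 1) \<bullet> ?r (t - 1))"
  have c: "m \<le> c" "c \<le> M"
    using curvature_pair_ratio[OF mM(1) pair] t unfolding c_def by auto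
  have B0: "?B 0 = c *\<^sub>R mat 1"
    using t by (simp add: olbfgs_gamma_def c_def)
  have step: "?B (Suc u) = bfgs_update (?B u) (?v (t - k + u)) (?r (t - k + u))" for u
    by (simp add: k_def)
  have pairs: "curvature_pair m M (?v (t - k + u)) (?r (t - k + u))" if "u < k" for u
    unfolding k_def by (intro pair) (use that k_def in arith)
  have bounds: "trace (?B k) \<le> (real CARD('n) + real k) * M"
      "m ^ CARD('n) * (m / ((real CARD('n) + real k) * M)) ^ k \<le> det (?B k)"
    using bfgs_iterates_bounds[where B="?B" and k=k, OF mM(1) c B0 step pairs order_refl] by auto
  have "(real CARD('n) + real k) * M \<le> (real CARD('n) + real tau) * M"
    using M by (simp add: k_def)
  moreover have "m ^ (CARD('n) + tau) / ((real CARD('n) + real tau) * M) ^ tau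
      \<le> m ^ CARD('n) * (m / ((real CARD('n) + real k) * M)) ^ k"
    by (rule power_ratio_bound_mono[OF mM]) (auto simp: k_def)
  ultimately show ?thesis
    unfolding olbfgs_B_def k_def[symmetric] using bounds by linarith
qed

end
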